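(* Let $A$ be a finite-dimensional vector space and define the bilinear form $\mathcal{B}$ on $A\oplus A^*$ by $\mathcal{B}(x+a^*,y+b^* )=\langle y,a^*\rangle-\langle x,b^*\rangle$. (a) If $(A,\bullet,\{\cdot,\cdot\})$ is a Poisson algebra, then $A\oplus A^*$ with $(x+a^* )\circ(y+b^* )=x\bullet y-L_\bullet^*(x)b^*$ and $[x+a^*,y+b^*]=\{x,y\}+\mathrm{ad}^*(x)b^*$, together with $\mathcal{B}$, is a quadratic dual pre-Poisson algebra. (b) If $(A,\circ,[\cdot,\cdot])$ is a dual pre-Poisson algebra, then $A\oplus A^*$ with $(x+a^* )\circ(y+b^* )=x\circ y-L_\circ^*(x)b^*+(-L_\circ^*+R_\circ^* )(y)a^*$ and $[x+a^*,y+b^*]=[x,y]+L_{[\cdot,\cdot]}^*(x)b^*-(L_{[\cdot,\cdot]}^*+R_{[\cdot,\cdot]}^* )(y)a^*$, together with $\mathcal{B}$, is a quadratic dual pre-Poisson algebra.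
   Context: Field $\mathbb{F}$ of characteristic $0$. $L_\diamond(x)y=x\diamond y$, $R_\diamond(x)y=y\diamond x$, $\mathrm{ad}(x)y=\{x,y\}$; for $f:A\to\mathrm{End}(V)$, $\langle f^*(x)v^*,u\rangle=-\langle v^*,f(x)u\rangle$. A Poisson algebra: $(A,\bullet)$ commutative associative, $(A,\{\cdot,\cdot\})$ Lie, $\{x,y\bullet z\}=\{x,y\}\bullet z+y\bullet\{x,z\}$. A dual pre-Poisson algebra: $x\circ(y\circ z)=(x\circ y)\circ z=(y\circ x)\circ z$; $[x,[y,z]]=[[x,y],z]+[y,[x,z]]$; $[x,y\circ z]=[x,y]\circ z+y\circ[x,z]$; $[x\circ y,z]=x\circ[y,z]+y\circ[x,z]$; $[x,y]\circ z=-[y,x]\circ z$. A quadratic dual pre-Poisson algebra is a dual pre-Poisson algebra with a nondegenerate skew-symmetric bilinear form $\mathcal{B}$ that is invariant: $\mathcal{B}(x\circ y,z)=\mathcal{B}(x,y\circ z-z\circ y)$ and $\mathcal{B}([x,y],z)=\mathcal{B}(x,[y,z]+[z,y])$ for all $x,y,z$. *)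

theory Defs
  imports Complex_Main "HOL-Library.Function_Algebras" "HOL-Library.Product_Plus"
begin

definition bilinear_op_on :: "('k::comm_ring_1 \<Rightarrow> 'v::ab_group_add \<Rightarrow> 'v) \<Rightarrow> 'v set \<Rightarrow> ('v \<Rightarrow> 'v \<Rightarrow> 'v) \<Rightarrow> bool" where
  "bilinear_op_on sc V m \<longleftrightarrow>
     (\<forall>x\<in>V. \<forall>y\<in>V. m x y \<in> V) \<and>
     (\<forall>x\<in>V. \<forall>y\<in>V. \<forall>z\<in>V. m (x + y) z = m x z + m y z \<and> m z (x + y) = m z x + m z y) \<and>
     (\<forall>c. \<forall>x\<in>V. \<forall>y\<in>V. m (sc c x) y = sc c (m x y) \<and> m x (sc c y) = sc c (m x y))"

definition bilinear_form_on :: "('k::comm_ring_1 \<Rightarrow> 'v::ab_group_add \<Rightarrow> 'v) \<Rightarrow> 'v set \<Rightarrow> ('v \<Rightarrow> 'v \<Rightarrow> 'k) \<Rightarrow> bool" where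
  "bilinear_form_on sc V B \<longleftrightarrow>
     (\<forall>x\<in>V. \<forall>y\<in>V. \<forall>z\<in>V. B (x + y) z = B x z + B y z \<and> B z (x + y) = B z x + B z y) \<and>
     (\<forall>c. \<forall>x\<in>V. \<forall>y\<in>V. B (sc c x) y = c * B x y \<and> B x (sc c y) = c * B x y)"

definition poisson_algebra :: "('k::field \<Rightarrow> 'a::ab_group_add \<Rightarrow> 'a) \<Rightarrow> ('a \<Rightarrow> 'a \<Rightarrow> 'a) \<Rightarrow> ('a \<Rightarrow> 'a \<Rightarrow> 'a) \<Rightarrow> bool" where
  "poisson_algebra sc dot pb \<longleftrightarrow>
     Vector_Spaces.vector_space sc \<and> bilinear_op_on sc UNIV dot \<and> bilinear_op_on sc UNIV pb \<and>
     (\<forall>x y. dot x y = dot y x) \<and>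
     (\<forall>x y z. dot (dot x y) z = dot x (dot y z)) \<and>
     (\<forall>x y. pb x y = - pb y x) \<and>
     (\<forall>x y z. pb x (pb y z) + pb y (pb z x) + pb z (pb x y) = 0) \<and>
     (\<forall>x y z. pb x (dot y z) = dot (pb x y) z + dot y (pb x z))"

definition dual_pre_poisson_on :: "('k::field \<Rightarrow> 'v::ab_group_add \<Rightarrow> 'v) \<Rightarrow> 'v set \<Rightarrow> ('v \<Rightarrow> 'v \<Rightarrow> 'v) \<Rightarrow> ('v \<Rightarrow> 'v \<Rightarrow> 'v) \<Rightarrow> bool" where
  "dual_pre_poisson_on sc V circ br \<longleftrightarrow>
     Vector_Spaces.vector_space sc \<and> Modules.module.subspace sc V \<and>
     bilinear_op_on sc V circ \<and> bilinear_op_on sc V br \<and>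
     (\<forall>x\<in>V. \<forall>y\<in>V. \<forall>z\<in>V.
        circ x (circ y z) = circ (circ x y) z \<and>
        circ (circ x y) z = circ (circ y x) z \<and>
        br x (br y z) = br (br x y) z + br y (br x z) \<and>
        br x (circ y z) = circ (br x y) z + circ y (br x z) \<and>
        br (circ x y) z = circ x (br y z) + circ y (br x z) \<and>
        circ (br x y) z = - circ (br y x) z)"

definition quadratic_dual_pre_poisson_on ::
  "('k::field \<Rightarrow> 'v::ab_group_add \<Rightarrow> 'v) \<Rightarrow> 'v set \<Rightarrow> ('v \<Rightarrow> 'v \<Rightarrow> 'v) \<Rightarrow> ('v \<Rightarrow> 'v \<Rightarrow> 'v) \<Rightarrow> ('v \<Rightarrow> 'v \<Rightarrow> 'k) \<Rightarrow> bool" where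
  "quadratic_dual_pre_poisson_on sc V circ br B \<longleftrightarrow>
     dual_pre_poisson_on sc V circ br \<and>
     bilinear_form_on sc V B \<and>
     (\<forall>x\<in>V. \<forall>y\<in>V. B x y = - B y x) \<and>
     (\<forall>x\<in>V. (\<forall>y\<in>V. B x y = 0) \<longrightarrow> x = 0) \<and>
     (\<forall>x\<in>V. \<forall>y\<in>V. \<forall>z\<in>V.
        B (circ x y) z = B x (circ y z - circ z y) \<and>
        B (br x y) z = B x (br y z + br z y))"

definition dual_space :: "('k::field \<Rightarrow> 'a::ab_group_add \<Rightarrow> 'a) \<Rightarrow> ('a \<Rightarrow> 'k) set" where
  "dual_space sc = {f. Vector_Spaces.linear sc (\<lambda>c d. c * d) f}"

definition dsum :: "('k::field \<Rightarrow> 'a::ab_group_add \<Rightarrow> 'a) \<Rightarrow> ('a \<times> ('a \<Rightarrow> 'k)) set" where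
  "dsum sc = {p. snd p \<in> dual_space sc}"

definition dsum_scale :: "('k::field \<Rightarrow> 'a::ab_group_add \<Rightarrow> 'a) \<Rightarrow> 'k \<Rightarrow> 'a \<times> ('a \<Rightarrow> 'k) \<Rightarrow> 'a \<times> ('a \<Rightarrow> 'k)" where
  "dsum_scale sc c p = (sc c (fst p), \<lambda>u. c * snd p u)"

definition dsum_form :: "'a \<times> ('a \<Rightarrow> 'k::field) \<Rightarrow> 'a \<times> ('a \<Rightarrow> 'k) \<Rightarrow> 'k" where
  "dsum_form p q = snd p (fst q) - snd q (fst p)"

definition dual_rep :: "('a \<Rightarrow> 'a \<Rightarrow> 'a) \<Rightarrow> 'a \<Rightarrow> ('a \<Rightarrow> 'k::field) \<Rightarrow> ('a \<Rightarrow> 'k)" where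
  "dual_rep f x v = (\<lambda>u. - v (f x u))"

definition Lmul :: "('a \<Rightarrow> 'a \<Rightarrow> 'a) \<Rightarrow> 'a \<Rightarrow> 'a \<Rightarrow> 'a" where "Lmul m x y = m x y"
definition Rmul :: "('a \<Rightarrow> 'a \<Rightarrow> 'a) \<Rightarrow> 'a \<Rightarrow> 'a \<Rightarrow> 'a" where "Rmul m x y = m y x"

definition circ_a :: "('a \<Rightarrow> 'a \<Rightarrow> 'a) \<Rightarrow> 'a \<times> ('a \<Rightarrow> 'k::field) \<Rightarrow> 'a \<times> ('a \<Rightarrow> 'k) \<Rightarrow> 'a \<times> ('a \<Rightarrow> 'k)" where
  "circ_a dot p q = (dot (fst p) (fst q), - dual_rep (Lmul dot) (fst p) (snd q))"

definition br_a :: "('a \<Rightarrow> 'a \<Rightarrow> 'a) \<Rightarrow> 'a \<times> ('a \<Rightarrow> 'k::field) \<Rightarrow> 'a \<times> ('a \<Rightarrow> 'k) \<Rightarrow> 'a \<times> ('a \<Rightarrow> 'k)" where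
  "br_a pb p q = (pb (fst p) (fst q), dual_rep (Lmul pb) (fst p) (snd q))"

definition circ_b :: "('a \<Rightarrow> 'a \<Rightarrow> 'a) \<Rightarrow> 'a \<times> ('a \<Rightarrow> 'k::field) \<Rightarrow> 'a \<times> ('a \<Rightarrow> 'k) \<Rightarrow> 'a \<times> ('a \<Rightarrow> 'k)" where
  "circ_b circ p q = (circ (fst p) (fst q),
      - dual_rep (Lmul circ) (fst p) (snd q)
      + (- dual_rep (Lmul circ) (fst q) (snd p) + dual_rep (Rmul circ) (fst q) (snd p)))"

definition br_b :: "('a \<Rightarrow> 'a \<Rightarrow> 'a) \<Rightarrow> 'a \<times> ('a \<Rightarrow> 'k::field) \<Rightarrow> 'a \<times> ('a \<Rightarrow> 'k) \<Rightarrow> 'a \<times> ('a \<Rightarrow> 'k)" where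
  "br_b br p q = (br (fst p) (fst q),
      dual_rep (Lmul br) (fst p) (snd q)
      - (dual_rep (Lmul br) (fst q) (snd p) + dual_rep (Rmul br) (fst q) (snd p)))"

end

theory Submission
  imports Defs
begin

(* The dual space A* is an ideal of A \<oplus> A* on which both products vanish.  Hence every
  defining identity of a dual pre-Poisson algebra, evaluated on A \<oplus> A*, splits into its
  A-component, which is the identity in A, and an A*-component that is linear in the single
  argument taken from A*.  Evaluated at u \<in> A, the A*-component is a linear combination of values
  of the functionals a, b, c at words in x, y, z, u, and it follows from identities of A:
  expand brackets of products by the two Leibniz rules, normalise products by associativity and
  (x \<circ> y) \<circ> z = (y \<circ> x) \<circ> z, and use the skew-symmetry of [x,y] \<circ> z and of [[x,y],z].
  Invariance of B is immediate from the formulas, and B is nondegenerate because the dual of a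
  finite-dimensional space separates points.

  Part (a) reduces to part (b): a Poisson algebra is a dual pre-Poisson algebra, and on A \<oplus> A*
  the operations of (a) coincide with those of (b) because \<bullet> is commutative and {,} is
  skew-symmetric. *)

lemma vector_space_field_mult: "Vector_Spaces.vector_space ((*) :: 'k::field \<Rightarrow> 'k \<Rightarrow> 'k)"
  by unfold_locales (auto simp: algebra_simps)

lemma dual_space_add [simp]: "f \<in> dual_space sc \<Longrightarrow> f (x + y) = f x + f y"
  and dual_space_scale [simp]: "f \<in> dual_space sc \<Longrightarrow> f (sc c x) = c * f x"
  by (simp_all add: dual_space_def Vector_Spaces.linear_iff)

lemma dual_space_zero [simp]: "f \<in> dual_space sc \<Longrightarrow> f 0 = 0"
  using dual_space_add[of f sc 0 0] by (metis add.right_neutral add_left_cancel)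

lemma dual_space_minus [simp]: "f \<in> dual_space sc \<Longrightarrow> f (- x) = - f x"
  using dual_space_add[of f sc x "- x"] by (metis add.right_inverse dual_space_zero minus_unique)

lemma dual_space_diff [simp]: "f \<in> dual_space sc \<Longrightarrow> f (x - y) = f x - f y"
  using dual_space_add[of f sc x "- y"] by simp

lemma dual_spaceI:
  assumes "Vector_Spaces.vector_space sc"
    and "\<And>x y. f (x + y) = f x + f y" and "\<And>c x. f (sc c x) = c * f x"
  shows "f \<in> dual_space sc"
  using assms vector_space_field_mult unfolding dual_space_def Vector_Spaces.linear_iff by blast

lemma zero_mem_dual_space: "Vector_Spaces.vector_space sc \<Longrightarrow> 0 \<in> dual_space sc"
  by (rule dual_spaceI) auto

lemma dual_space_separates_points:
  assumes "finite_dimensional_vector_space sc Basis"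
    and "\<And>f. f \<in> dual_space sc \<Longrightarrow> f x = 0"
  shows "x = 0"
proof -
  interpret finite_dimensional_vector_space sc Basis by fact
  have "representation Basis x b = 0" for b
    using assms(2)[of "\<lambda>v. representation Basis v b"]
      linear_representation[OF independent_Basis span_Basis]
    by (simp add: dual_space_def)
  then show ?thesis
    using sum_nonzero_representation_eq[OF independent_Basis, of x] span_Basis by simp
qed

locale bilinear_op =
  fixes sc :: "'k::comm_ring_1 \<Rightarrow> 'a::ab_group_add \<Rightarrow> 'a" and m :: "'a \<Rightarrow> 'a \<Rightarrow> 'a"
  assumes bilinear: "bilinear_op_on sc UNIV m"
begin

lemma add_left [simp]: "m (x + y) z = m x z + m y z"
  and add_right [simp]: "m z (x + y) = m z x + m z y"
  and scale_left [simp]: "m (sc c x) y = sc c (m x y)"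
  and scale_right [simp]: "m x (sc c y) = sc c (m x y)"
  using bilinear unfolding bilinear_op_on_def by blast+

lemma zero_right [simp]: "m x 0 = 0"
  using add_right[of x 0 0] by simp

lemma minus_right [simp]: "m x (- y) = - m x y"
  using add_right[of x y "- y"] by (metis add.right_inverse zero_right minus_unique)

end

lemma mem_dsum_Pair [simp]: "(x, a) \<in> dsum sc \<longleftrightarrow> a \<in> dual_space sc"
  by (simp add: dsum_def)

lemma Ball_dsum: "(\<forall>p\<in>dsum sc. P p) \<longleftrightarrow> (\<forall>x a. a \<in> dual_space sc \<longrightarrow> P (x, a))"
  by (auto simp: dsum_def)

lemma dsum_scale_Pair [simp]: "dsum_scale sc c (x, a) = (sc c x, \<lambda>u. c * a u)"
  by (simp add: dsum_scale_def)

lemma dsum_form_Pair [simp]: "dsum_form (x, a) (y, b) = a y - b x"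
  by (simp add: dsum_form_def)

lemma vector_space_dsum_scale:
  assumes "Vector_Spaces.vector_space sc"
  shows "Vector_Spaces.vector_space (dsum_scale sc)"
proof -
  interpret vector_space sc by fact
  show ?thesis
    by unfold_locales (auto simp: dsum_scale_def scale_right_distrib scale_left_distrib fun_eq_iff algebra_simps)
qed

lemma subspace_dsum:
  assumes vs: "Vector_Spaces.vector_space sc"
  shows "module.subspace (dsum_scale sc) (dsum sc)"
proof -
  interpret vector_space "dsum_scale sc" by (rule vector_space_dsum_scale[OF vs])
  show ?thesis
    unfolding subspace_def Ball_dsum
    by (auto intro!: dual_spaceI[OF vs] zero_mem_dual_space[OF vs] simp: zero_prod_def algebra_simps)
qed

lemma bilinear_form_on_dsum_form: "bilinear_form_on (dsum_scale sc) (dsum sc) dsum_form"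
  unfolding bilinear_form_on_def Ball_dsum by (simp add: algebra_simps)

lemma dsum_form_skew: "dsum_form p q = - dsum_form q p"
  by (simp add: dsum_form_def)

lemma dsum_form_nondegenerate:
  assumes fd: "finite_dimensional_vector_space sc Basis" and a: "a \<in> dual_space sc"
    and orth: "\<forall>y b. b \<in> dual_space sc \<longrightarrow> dsum_form (x, a) (y, b) = 0"
  shows "(x, a) = 0"
proof -
  have vs: "Vector_Spaces.vector_space sc"
    using fd by (simp add: finite_dimensional_vector_space_def)
  have "x = 0"
  proof (rule dual_space_separates_points[OF fd])
    fix f assume "f \<in> dual_space sc"
    then show "f x = 0" using orth[rule_format, where y = 0 and b = f] a by simp
  qed
  moreover have "a y = 0" for y
    using orth[rule_format, where y = y and b = 0] zero_mem_dual_space[OF vs] by simp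
  ultimately show ?thesis
    by (simp add: zero_prod_def fun_eq_iff)
qed

lemma quadratic_dual_pre_poisson_on_cong:
  assumes Q: "quadratic_dual_pre_poisson_on sc V m k B"
    and m: "\<And>x y. x \<in> V \<Longrightarrow> y \<in> V \<Longrightarrow> m' x y = m x y"
    and k: "\<And>x y. x \<in> V \<Longrightarrow> y \<in> V \<Longrightarrow> k' x y = k x y"
  shows "quadratic_dual_pre_poisson_on sc V m' k' B"
proof -
  have vs: "Vector_Spaces.vector_space sc" and sub: "module.subspace sc V"
    and closed: "\<And>x y. x \<in> V \<Longrightarrow> y \<in> V \<Longrightarrow> m x y \<in> V \<and> k x y \<in> V"
    using Q by (auto simp: quadratic_dual_pre_poisson_on_def dual_pre_poisson_on_def bilinear_op_on_def)
  interpret vector_space sc by (rule vs)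
  have "quadratic_dual_pre_poisson_on sc V m' k' B \<longleftrightarrow> quadratic_dual_pre_poisson_on sc V m k B"
    unfolding quadratic_dual_pre_poisson_on_def dual_pre_poisson_on_def bilinear_op_on_def
    by (simp add: m k closed subspace_add[OF sub] subspace_scale[OF sub])
  with Q show ?thesis
    by blast
qed

lemma circ_b_Pair [simp]:
  "circ_b m (x, a) (y, b) = (m x y, \<lambda>u. b (m x u) + a (m y u) - a (m u y))"
  by (simp add: circ_b_def dual_rep_def Lmul_def Rmul_def fun_eq_iff)

lemma br_b_Pair [simp]:
  "br_b k (x, a) (y, b) = (k x y, \<lambda>u. a (k y u) + a (k u y) - b (k x u))"
  by (simp add: br_b_def dual_rep_def Lmul_def Rmul_def fun_eq_iff algebra_simps)

locale dual_pre_poisson =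
  fixes sc :: "'k::field \<Rightarrow> 'a::ab_group_add \<Rightarrow> 'a" and m k :: "'a \<Rightarrow> 'a \<Rightarrow> 'a"
  assumes dual_pre_poisson: "dual_pre_poisson_on sc UNIV m k"
begin

sublocale circ: bilinear_op sc m
  using dual_pre_poisson by unfold_locales (simp add: dual_pre_poisson_on_def)

sublocale bracket: bilinear_op sc k
  using dual_pre_poisson by unfold_locales (simp add: dual_pre_poisson_on_def)

lemma vector_space_scale: "Vector_Spaces.vector_space sc"
  using dual_pre_poisson by (simp add: dual_pre_poisson_on_def)

lemma circ_assoc: "m x (m y z) = m (m x y) z"
  and circ_left_perm: "m (m x y) z = m (m y x) z"
  and bracket_jacobi: "k x (k y z) = k (k x y) z + k y (k x z)"
  and bracket_circ_right: "k x (m y z) = m (k x y) z + m y (k x z)"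
  and bracket_circ_left: "k (m x y) z = m x (k y z) + m y (k x z)"
  and circ_bracket_skew: "m (k x y) z = - m (k y x) z"
  using dual_pre_poisson unfolding dual_pre_poisson_on_def by blast+

lemma bracket_bracket_skew: "k (k x y) z = - k (k y x) z"
proof -
  have square: "k (k w w) z = 0" for w
    using bracket_jacobi[of w w z] by simp
  have "k (k x y) z + k (k y x) z = 0"
    using square[of "x + y"] by (simp add: square add.commute)
  then show ?thesis
    by (simp add: eq_neg_iff_add_eq_0)
qed

text \<open>The global simplification rules for functionals mention \<open>sc\<close> only in their
  premise, so the simplifier can use them only once \<open>sc\<close> is fixed.\<close>

lemmas dual_space_linear [simp] =
  dual_space_add[where sc = sc] dual_space_scale[where sc = sc]
  dual_space_minus[where sc = sc] dual_space_diff[where sc = sc]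

lemma bilinear_op_on_circ_b: "bilinear_op_on (dsum_scale sc) (dsum sc) (circ_b m)"
  unfolding bilinear_op_on_def Ball_dsum
  by (auto intro!: dual_spaceI[OF vector_space_scale] simp: fun_eq_iff algebra_simps)

lemma bilinear_op_on_br_b: "bilinear_op_on (dsum_scale sc) (dsum sc) (br_b k)"
  unfolding bilinear_op_on_def Ball_dsum
  by (auto intro!: dual_spaceI[OF vector_space_scale] simp: fun_eq_iff algebra_simps)

context
  fixes a b c :: "'a \<Rightarrow> 'k"
  assumes a: "a \<in> dual_space sc" and b: "b \<in> dual_space sc" and c: "c \<in> dual_space sc"
begin

lemma circ_b_assoc:
  "circ_b m (x, a) (circ_b m (y, b) (z, c)) = circ_b m (circ_b m (x, a) (y, b)) (z, c)"
  by (simp add: fun_eq_iff a b c circ_assoc circ_left_perm algebra_simps)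

lemma circ_b_left_perm:
  "circ_b m (circ_b m (x, a) (y, b)) (z, c) = circ_b m (circ_b m (y, b) (x, a)) (z, c)"
  by (simp add: fun_eq_iff a b c circ_assoc circ_left_perm algebra_simps)

text \<open>Each instance of the Jacobi identity is applied only under the functional whose
  coefficient it settles; as plain rewrite rules these instances make the simplifier loop.\<close>

lemma br_b_jacobi:
  "br_b k (x, a) (br_b k (y, b) (z, c))
     = br_b k (br_b k (x, a) (y, b)) (z, c) + br_b k (y, b) (br_b k (x, a) (z, c))"
  by (simp add: fun_eq_iff a b c bracket_jacobi[of x y z]
      bracket_jacobi[of x y, THEN arg_cong[where f = c]]
      bracket_jacobi[of x z, THEN arg_cong[where f = b]]
      bracket_jacobi[of x _ z, THEN arg_cong[where f = b]]
      bracket_jacobi[of y z, THEN arg_cong[where f = a]]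
      bracket_jacobi[of y _ z, THEN arg_cong[where f = a]]
      bracket_bracket_skew[of z _ y, THEN arg_cong[where f = a]] algebra_simps)

lemma br_b_circ_b_right:
  "br_b k (x, a) (circ_b m (y, b) (z, c))
     = circ_b m (br_b k (x, a) (y, b)) (z, c) + circ_b m (y, b) (br_b k (x, a) (z, c))"
  by (simp add: fun_eq_iff a b c bracket_circ_right bracket_circ_left circ_bracket_skew[of y]
      algebra_simps)

lemma br_b_circ_b_left:
  "br_b k (circ_b m (x, a) (y, b)) (z, c)
     = circ_b m (x, a) (br_b k (y, b) (z, c)) + circ_b m (y, b) (br_b k (x, a) (z, c))"
  by (simp add: fun_eq_iff a b c bracket_circ_right bracket_circ_left
      circ_bracket_skew[of y x] circ_bracket_skew[of z x] circ_bracket_skew[of z y]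
      circ_bracket_skew[of _ z y] algebra_simps)

lemma circ_b_br_b_skew:
  "circ_b m (br_b k (x, a) (y, b)) (z, c) = - circ_b m (br_b k (y, b) (x, a)) (z, c)"
  by (simp add: fun_eq_iff a b c bracket_circ_left circ_bracket_skew[of y] algebra_simps)

lemma dsum_form_circ_b_invariant:
  "dsum_form (circ_b m (x, a) (y, b)) (z, c)
     = dsum_form (x, a) (circ_b m (y, b) (z, c) - circ_b m (z, c) (y, b))"
  by (simp add: a b c algebra_simps)

lemma dsum_form_br_b_invariant:
  "dsum_form (br_b k (x, a) (y, b)) (z, c)
     = dsum_form (x, a) (br_b k (y, b) (z, c) + br_b k (z, c) (y, b))"
  by (simp add: a b c algebra_simps)

end

lemma quadratic_dual_pre_poisson_dsum:
  assumes fd: "finite_dimensional_vector_space sc Basis"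
  shows "quadratic_dual_pre_poisson_on (dsum_scale sc) (dsum sc) (circ_b m) (br_b k) dsum_form"
  unfolding quadratic_dual_pre_poisson_on_def dual_pre_poisson_on_def Ball_dsum
  using vector_space_dsum_scale[OF vector_space_scale] subspace_dsum[OF vector_space_scale]
    bilinear_op_on_circ_b bilinear_op_on_br_b bilinear_form_on_dsum_form
  by (intro conjI allI impI)
    (assumption | rule circ_b_assoc circ_b_left_perm br_b_jacobi br_b_circ_b_right
      br_b_circ_b_left circ_b_br_b_skew dsum_form_circ_b_invariant dsum_form_br_b_invariant
      dsum_form_skew dsum_form_nondegenerate[OF fd])+

end

lemma poisson_algebra_imp_dual_pre_poisson:
  assumes P: "poisson_algebra sc dot pb"
  shows "dual_pre_poisson_on sc UNIV dot pb"
proof -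
  interpret vector_space sc
    using P by (simp add: poisson_algebra_def)
  interpret circ: bilinear_op sc dot
    using P by unfold_locales (simp add: poisson_algebra_def)
  interpret bracket: bilinear_op sc pb
    using P by unfold_locales (simp add: poisson_algebra_def)
  have comm: "dot x y = dot y x" and assoc: "dot (dot x y) z = dot x (dot y z)"
    and skew: "pb x y = - pb y x"
    and jacobi: "pb x (pb y z) + pb y (pb z x) + pb z (pb x y) = 0"
    and leibniz: "pb x (dot y z) = dot (pb x y) z + dot y (pb x z)" for x y z
    using P unfolding poisson_algebra_def by blast+
  have left_perm: "dot (dot x y) z = dot (dot y x) z" for x y z
    by (simp only: comm[of x y])
  have jacobi_leibniz: "pb x (pb y z) = pb (pb x y) z + pb y (pb x z)" for x y z
  proof -
    have "pb x (pb y z) = - (pb y (pb z x) + pb z (pb x y))"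
      using jacobi[of x y z] by (simp only: add.assoc eq_neg_iff_add_eq_0)
    also have "\<dots> = pb (pb x y) z + pb y (pb x z)"
      by (subst (1 2) skew) (simp add: add.commute)
    finally show ?thesis .
  qed
  have leibniz_left: "pb (dot x y) z = dot x (pb y z) + dot y (pb x z)" for x y z
  proof -
    have "pb (dot x y) z = - (dot (pb z x) y + dot x (pb z y))"
      by (subst skew) (simp add: leibniz)
    also have "\<dots> = dot x (pb y z) + dot y (pb x z)"
      by (subst (1 2) skew) (simp add: comm)
    finally show ?thesis .
  qed
  have skew_dot: "dot (pb x y) z = - dot (pb y x) z" for x y z
    by (metis comm skew circ.minus_right)
  have "Vector_Spaces.vector_space sc" "bilinear_op_on sc UNIV dot" "bilinear_op_on sc UNIV pb"
    using P unfolding poisson_algebra_def by blast+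
  then show ?thesis
    unfolding dual_pre_poisson_on_def
    by (intro conjI ballI subspace_UNIV)
      (assumption | rule assoc[symmetric] left_perm jacobi_leibniz leibniz leibniz_left skew_dot)+
qed

lemma circ_a_eq_circ_b:
  assumes "\<And>x y. dot x y = dot y x"
  shows "circ_a dot p q = circ_b dot p q"
  by (simp add: circ_a_def circ_b_def dual_rep_def Lmul_def Rmul_def fun_eq_iff assms)

lemma br_a_eq_br_b:
  assumes skew: "\<And>x y. pb x y = - pb y x" and "p \<in> dsum sc"
  shows "br_a pb p q = br_b pb p q"
proof -
  obtain x a y b where "p = (x, a)" and "q = (y, b)" and "a \<in> dual_space sc"
    using \<open>p \<in> dsum sc\<close> by (cases p, cases q) simp
  then show ?thesis
    by (simp add: br_a_def dual_rep_def Lmul_def fun_eq_iff skew[of _ y])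
qed

lemma poisson_quadratic_dual_pre_poisson_dsum:
  assumes P: "poisson_algebra sc dot pb" and fd: "finite_dimensional_vector_space sc Basis"
  shows "quadratic_dual_pre_poisson_on (dsum_scale sc) (dsum sc) (circ_a dot) (br_a pb) dsum_form"
proof (rule quadratic_dual_pre_poisson_on_cong)
  interpret dual_pre_poisson sc dot pb
    using poisson_algebra_imp_dual_pre_poisson[OF P] by unfold_locales
  show "quadratic_dual_pre_poisson_on (dsum_scale sc) (dsum sc) (circ_b dot) (br_b pb) dsum_form"
    using fd by (rule quadratic_dual_pre_poisson_dsum)
  have comm: "\<And>x y. dot x y = dot y x" and skew: "\<And>x y. pb x y = - pb y x"
    using P unfolding poisson_algebra_def by blast+
  show "circ_a dot p q = circ_b dot p q" for p q
    using comm by (rule circ_a_eq_circ_b)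
  show "br_a pb p q = br_b pb p q" if "p \<in> dsum sc" for p q
    using skew that by (rule br_a_eq_br_b)
qed

theorem proposition2p34:
  fixes sc :: "'k::field_char_0 \<Rightarrow> 'a::ab_group_add \<Rightarrow> 'a"
  assumes fd: "\<exists>Basis. finite_dimensional_vector_space sc Basis"
  shows "(\<forall>dot pb. poisson_algebra sc dot pb \<longrightarrow>
            quadratic_dual_pre_poisson_on (dsum_scale sc) (dsum sc) (circ_a dot) (br_a pb) dsum_form)
       \<and> (\<forall>circ br. dual_pre_poisson_on sc UNIV circ br \<longrightarrow>
            quadratic_dual_pre_poisson_on (dsum_scale sc) (dsum sc) (circ_b circ) (br_b br) dsum_form)"
proof -
  obtain Basis where fd: "finite_dimensional_vector_space sc Basis"
    using fd by blast
  show ?thesis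
    using poisson_quadratic_dual_pre_poisson_dsum[OF _ fd]
      dual_pre_poisson.quadratic_dual_pre_poisson_dsum[OF _ fd]
    by (simp add: dual_pre_poisson_def)
qed

end
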